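(* Let $\theta>1$, $r\in(\theta^{-1},\theta^{-1/2}]$ and $\beta=\frac{1-r^2\theta}{r\theta}\max\big(\frac1{1-r},\frac1{r\theta-1}\big)$. Let $(P_1,\dots,P_n)$ be a random price sequence with values in $[1,\theta]$ whose maximum $P^*$ has law $F$, and $Y$ a random prediction with law $G$ on $[1,\theta]$ (arbitrary joint law). Then \[ \frac{\mathbb{E}[\mathsf{A}^1_r(P,Y)]}{\mathbb{E}[P^*]}\ \ge\ \frac1{r\theta}-\beta\sup_{\pi\in\Pi(F,G)}\frac{\int z\,|z-y|\,\mathrm{d}\pi(z,y)}{\mathbb{E}[P^*]}, \] where $\Pi(F,G)$ is the set of couplings of $F$ and $G$.
   Context: One-max search: fix $\theta>1$. Prices $p_1,\dots,p_n\in[1,\theta]$ are revealed one at a time; the algorithm receives at the start a prediction $y\in[1,\theta]$ of the maximum price. At each step it irrevocably accepts the current price (payoff = that price) or rejects it; if nothing is accepted the payoff is $1$. Let $\varphi_r(z)=\frac{r\theta-1}{1-r}+\frac{1-r^2\theta}{1-r}\cdot\frac{z}{r\theta}$ and $\Phi^1_r(z)=\max(r\theta,\varphi_r(z))$; $\mathsf{A}^1_r$ accepts the first price $p_i\ge\Phi^1_r(y)$, and $\mathsf{A}^1_r(P,Y)$ is its payoff on the realized prices and prediction. A coupling of $F,G$ is a probability measure on $[1,\theta]^2$ with marginals $F,G$. *)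

theory Defs
  imports "HOL-Probability.Probability"
begin

definition phi_r :: "real \<Rightarrow> real \<Rightarrow> real \<Rightarrow> real" where
  "phi_r \<theta> r z = (r * \<theta> - 1) / (1 - r) + (1 - r\<^sup>2 * \<theta>) / (1 - r) * (z / (r * \<theta>))"

definition Phi1 :: "real \<Rightarrow> real \<Rightarrow> real \<Rightarrow> real" where
  "Phi1 \<theta> r z = max (r * \<theta>) (phi_r \<theta> r z)"

text \<open>Payoff of algorithm A^1_r on prices p 0, ..., p (n-1) (revealed in this order)
  with prediction y: the first price at least Phi1 y is accepted; payoff 1 if none is.\<close>
definition A1 :: "real \<Rightarrow> real \<Rightarrow> nat \<Rightarrow> (nat \<Rightarrow> real) \<Rightarrow> real \<Rightarrow> real" where
  "A1 \<theta> r n p y =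
     (if \<exists>i<n. Phi1 \<theta> r y \<le> p i
      then p (LEAST i. i < n \<and> Phi1 \<theta> r y \<le> p i)
      else 1)"

text \<open>Couplings of F and G: probability measures on the (Borel) plane with marginals F and G.
  (For F, G supported on [1,theta], any such coupling is concentrated on [1,theta]^2.)\<close>
definition couplings :: "real measure \<Rightarrow> real measure \<Rightarrow> (real \<times> real) measure set" where
  "couplings F G = {\<pi>. prob_space \<pi> \<and> sets \<pi> = sets (borel :: (real \<times> real) measure)
      \<and> distr \<pi> borel fst = F \<and> distr \<pi> borel snd = G}"

end

theory Submission
  imports Defs
begin

(* Pointwise, let m be the maximal price and y the prediction. If the algorithm accepts a price, it earns
   at least Phi^1_r(y) >= phi_r(y), and phi_r(y) differs from phi_r(m) >= m/(r theta) by at most the slope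
   of phi_r times |m - y|. If it rejects every price, then m < Phi^1_r(y): either m <= r theta, so that
   m/(r theta) <= 1, or m < phi_r(y), which forces y > m and bounds m/(r theta) - 1 by a multiple of y - m.
   In both cases it earns at least m/(r theta) - beta m |m - y|.
   Taking expectations, E[A] >= E[P*]/(r theta) - beta E[P* |P* - Y|]. The joint law of (P*, Y) is a
   coupling of F and G, so the last expectation is at most the supremum over couplings; finally
   E[P*] >= 1 allows the division. *)

lemma threshold_parameter_bounds:
  fixes \<theta> r :: real
  assumes \<theta>: "1 < \<theta>" and r_lo: "1 / \<theta> < r" and r_hi: "r \<le> 1 / sqrt \<theta>"
  shows "0 < r" "r < 1" "1 < r * \<theta>" "r\<^sup>2 * \<theta> \<le> 1"
proof -
  show "1 < r * \<theta>" using r_lo \<theta> by (simp add: field_simps)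
  show "0 < r" using r_lo \<theta> less_trans[OF divide_pos_pos[of 1 \<theta>]] by simp
  have "r * sqrt \<theta> \<le> 1" using r_hi \<theta> by (simp add: field_simps)
  then have "(r * sqrt \<theta>)\<^sup>2 \<le> 1" using \<open>0 < r\<close> \<theta> by (intro power_le_one) auto
  then show "r\<^sup>2 * \<theta> \<le> 1" using \<theta> by (simp add: power_mult_distrib)
  show "r < 1"
  proof (rule ccontr)
    assume "\<not> r < 1"
    then have "1 * 1 < r\<^sup>2 * \<theta>" using \<theta> by (intro mult_le_less_imp_less) (auto simp: one_le_power)
    then show False using \<open>r\<^sup>2 * \<theta> \<le> 1\<close> by simp
  qed
qed

(* phi_r is the affine function through (r theta, r theta) and (theta, 1/r). *)
lemma phi_r_sub_scaled:
  assumes "r \<noteq> 1" "r \<noteq> 0" "\<theta> \<noteq> 0"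
  shows "phi_r \<theta> r z - z / (r * \<theta>) = (r * \<theta> - 1) / (1 - r) * (1 - z / \<theta>)"
proof -
  have "1 - r \<noteq> 0" using assms by simp
  then show ?thesis
    using assms unfolding phi_r_def by (simp add: divide_simps) (simp add: algebra_simps power2_eq_square)
qed

lemma phi_r_sub_id:
  assumes "r \<noteq> 1" "r \<noteq> 0" "\<theta> \<noteq> 0"
  shows "phi_r \<theta> r z - z = (r * \<theta> - 1) / (1 - r) * (1 - z / (r * \<theta>))"
proof -
  have "1 - r \<noteq> 0" using assms by simp
  then show ?thesis
    using assms unfolding phi_r_def by (simp add: divide_simps) (simp add: algebra_simps power2_eq_square)
qed

lemma phi_r_diff:
  "phi_r \<theta> r z - phi_r \<theta> r y = (1 - r\<^sup>2 * \<theta>) / (1 - r) * ((z - y) / (r * \<theta>))"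
  unfolding phi_r_def by (simp add: diff_divide_distrib right_diff_distrib)

lemma scaled_minus_penalty_le_Phi1:
  fixes \<theta> r m y \<beta> :: real
  assumes r: "0 < r" "r < 1" "1 < r * \<theta>" "r\<^sup>2 * \<theta> \<le> 1"
    and m: "1 \<le> m" "m \<le> \<theta>"
    and \<beta>: "(1 - r\<^sup>2 * \<theta>) / (r * \<theta>) * (1 / (1 - r)) \<le> \<beta>"
  shows "m / (r * \<theta>) - \<beta> * (m * \<bar>m - y\<bar>) \<le> Phi1 \<theta> r y"
proof -
  have "0 < \<theta>" using r zero_less_mult_pos[of r \<theta>] by simp
  define c where "c = (1 - r\<^sup>2 * \<theta>) / (1 - r)"
  have c_nonneg: "0 \<le> c" using r unfolding c_def by simp
  have slope_le: "c / (r * \<theta>) \<le> \<beta>" using \<beta> unfolding c_def by (simp add: mult.commute)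
  have "0 \<le> (r * \<theta> - 1) / (1 - r) * (1 - m / \<theta>)"
    using r m by (intro mult_nonneg_nonneg) auto
  then have "m / (r * \<theta>) \<le> phi_r \<theta> r m"
    using phi_r_sub_scaled[of r \<theta> m] r \<open>0 < \<theta>\<close> by simp
  also have "\<dots> = phi_r \<theta> r y + c * ((m - y) / (r * \<theta>))"
    using phi_r_diff[of \<theta> r m y] unfolding c_def by simp
  also have "\<dots> \<le> Phi1 \<theta> r y + c * (\<bar>m - y\<bar> / (r * \<theta>))"
    using c_nonneg r by (auto simp: Phi1_def intro!: add_mono mult_left_mono divide_right_mono)
  also have "\<dots> \<le> Phi1 \<theta> r y + \<beta> * (m * \<bar>m - y\<bar>)"
  proof -
    have "c * (\<bar>m - y\<bar> / (r * \<theta>)) \<le> \<beta> * \<bar>m - y\<bar>"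
      using mult_right_mono[OF slope_le, of "\<bar>m - y\<bar>"] by simp
    also have "\<dots> \<le> \<beta> * (m * \<bar>m - y\<bar>)"
    proof (rule mult_left_mono)
      show "\<bar>m - y\<bar> \<le> m * \<bar>m - y\<bar>"
        using mult_right_mono[OF m(1) abs_ge_zero[of "m - y"]] by simp
      show "0 \<le> \<beta>"
        using order_trans[OF _ slope_le] c_nonneg r by simp
    qed
    finally show ?thesis by simp
  qed
  finally show ?thesis by simp
qed

lemma scaled_minus_penalty_le_1_below_Phi1:
  fixes \<theta> r m y \<beta> :: real
  assumes r: "0 < r" "r < 1" "1 < r * \<theta>" "r\<^sup>2 * \<theta> \<le> 1"
    and m: "1 \<le> m" "m < Phi1 \<theta> r y"
    and \<beta>: "(1 - r\<^sup>2 * \<theta>) / (r * \<theta>) * (1 / (r * \<theta> - 1)) \<le> \<beta>"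
  shows "m / (r * \<theta>) - \<beta> * (m * \<bar>m - y\<bar>) \<le> 1"
proof -
  have "0 < \<theta>" using r zero_less_mult_pos[of r \<theta>] by simp
  define a where "a = r * \<theta>"
  define k where "k = (a - 1) / (1 - r)"
  define C where "C = (1 - r\<^sup>2 * \<theta>) / a * (1 / (a - 1))"
  have a: "1 < a" and k: "0 < k" using r unfolding a_def k_def by auto
  have C: "0 \<le> C" "C \<le> \<beta>" using r a \<beta> unfolding C_def a_def by auto
  have penalty_nonneg: "0 \<le> \<beta> * (m * \<bar>m - y\<bar>)" using C m by simp
  show ?thesis
  proof (cases "m \<le> a")
    case True
    then have "m / a \<le> 1" using a by simp
    then show ?thesis using penalty_nonneg unfolding a_def by linarith
  next
    case False
    then have "m < phi_r \<theta> r y" using m unfolding Phi1_def a_def by simp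
    moreover have "phi_r \<theta> r m - m = k * (1 - m / a)"
      using phi_r_sub_id[of r \<theta> m] r \<open>0 < \<theta>\<close> unfolding k_def a_def by simp
    moreover have "phi_r \<theta> r y - phi_r \<theta> r m = (1 - r\<^sup>2 * \<theta>) / (1 - r) * ((y - m) / a)"
      using phi_r_diff[of \<theta> r y m] unfolding a_def .
    ultimately have "k * (m / a - 1) < (1 - r\<^sup>2 * \<theta>) / (1 - r) * ((y - m) / a)"
      by (simp add: algebra_simps)
    then have "m / a - 1 < (1 - r\<^sup>2 * \<theta>) / (1 - r) * ((y - m) / a) / k"
      by (subst pos_less_divide_eq[OF k]) (metis mult.commute)
    also have "\<dots> = C * (y - m)"
      using r unfolding k_def C_def by simp
    finally have less: "m / a - 1 < C * (y - m)" .
    moreover have "0 < m / a - 1" using False a by simp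
    ultimately have "m < y" using C(1) zero_less_mult_iff[of C "y - m"] by linarith
    note less
    also have "C * (y - m) \<le> \<beta> * (y - m)"
      using C(2) \<open>m < y\<close> by (intro mult_right_mono) auto
    also have "\<dots> \<le> \<beta> * (m * \<bar>m - y\<bar>)"
      using C m \<open>m < y\<close> by (intro mult_left_mono) auto
    finally show ?thesis unfolding a_def by simp
  qed
qed

lemma A1_cases:
  obtains (accept) j where "j < n" "Phi1 \<theta> r y \<le> p j" "A1 \<theta> r n p y = p j"
    | (reject) "\<forall>i<n. p i < Phi1 \<theta> r y" "A1 \<theta> r n p y = 1"
proof (cases "\<exists>i<n. Phi1 \<theta> r y \<le> p i")
  case True
  define j where "j = (LEAST i. i < n \<and> Phi1 \<theta> r y \<le> p i)"
  have "j < n \<and> Phi1 \<theta> r y \<le> p j" using True unfolding j_def by (rule LeastI_ex)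
  moreover have "A1 \<theta> r n p y = p j" using True unfolding A1_def j_def by simp
  ultimately show ?thesis using accept by blast
next
  case False
  moreover from False have "A1 \<theta> r n p y = 1" unfolding A1_def by auto
  ultimately show ?thesis using reject by (simp add: not_le)
qed

lemma A1_cong:
  assumes "\<And>i. i < n \<Longrightarrow> p i = q i"
  shows "A1 \<theta> r n p y = A1 \<theta> r n q y"
proof -
  have same_test: "(\<lambda>i. i < n \<and> Phi1 \<theta> r y \<le> p i) = (\<lambda>i. i < n \<and> Phi1 \<theta> r y \<le> q i)"
    using assms by auto
  show ?thesis
  proof (cases "\<exists>i<n. Phi1 \<theta> r y \<le> p i")
    case True
    then have "(LEAST i. i < n \<and> Phi1 \<theta> r y \<le> p i) < n" by (metis (mono_tags, lifting) LeastI)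
    then show ?thesis using True assms unfolding A1_def same_test by simp
  next
    case False
    then show ?thesis unfolding A1_def using assms by auto
  qed
qed

lemma A1_in:
  assumes "\<And>i. i < n \<Longrightarrow> p i \<in> S" and "1 \<in> S"
  shows "A1 \<theta> r n p y \<in> S"
  using assms by (cases rule: A1_cases[of n \<theta> r y p]) auto

lemma Max_image_lessThan_in:
  fixes n :: nat
  assumes "1 \<le> n" and "\<And>i. i < n \<Longrightarrow> p i \<in> S"
  shows "Max (p ` {..<n}) \<in> S"
proof -
  have "Max (p ` {..<n}) \<in> p ` {..<n}" using assms(1) by (intro Max_in) (auto simp: lessThan_empty_iff)
  then show ?thesis using assms(2) by auto
qed

lemma scaled_Max_minus_penalty_le_A1:
  fixes \<theta> r y \<beta> :: real and p :: "nat \<Rightarrow> real"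
  assumes r: "0 < r" "r < 1" "1 < r * \<theta>" "r\<^sup>2 * \<theta> \<le> 1"
    and \<beta>: "(1 - r\<^sup>2 * \<theta>) / (r * \<theta>) * (1 / (1 - r)) \<le> \<beta>"
      "(1 - r\<^sup>2 * \<theta>) / (r * \<theta>) * (1 / (r * \<theta> - 1)) \<le> \<beta>"
    and n: "1 \<le> n" and p: "\<And>i. i < n \<Longrightarrow> p i \<in> {1..\<theta>}"
  defines "m \<equiv> Max (p ` {..<n})"
  shows "m / (r * \<theta>) - \<beta> * (m * \<bar>m - y\<bar>) \<le> A1 \<theta> r n p y"
proof -
  have "m \<in> p ` {..<n}" unfolding m_def using n by (intro Max_image_lessThan_in) auto
  moreover have "m \<in> {1..\<theta>}" unfolding m_def using n p by (rule Max_image_lessThan_in)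
  ultimately have m: "1 \<le> m" "m \<le> \<theta>" by auto
  show ?thesis
  proof (cases rule: A1_cases[of n \<theta> r y p])
    case (accept j)
    then show ?thesis using scaled_minus_penalty_le_Phi1[OF r m \<beta>(1), of y] by simp
  next
    case reject
    with \<open>m \<in> p ` {..<n}\<close> have "m < Phi1 \<theta> r y" by auto
    then show ?thesis using scaled_minus_penalty_le_1_below_Phi1[OF r m(1) _ \<beta>(2)] reject by simp
  qed
qed

lemma borel_measurable_Phi1[measurable]: "Phi1 \<theta> r \<in> borel_measurable borel"
  unfolding Phi1_def phi_r_def by measurable

lemma borel_measurable_A1:
  assumes "\<And>i. i < n \<Longrightarrow> (\<lambda>\<omega>. P \<omega> i) \<in> borel_measurable M" and [measurable]: "Y \<in> borel_measurable M"
  shows "(\<lambda>\<omega>. A1 \<theta> r n (P \<omega>) (Y \<omega>)) \<in> borel_measurable M"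
proof -
  \<comment> \<open>\<open>P \<omega> i\<close> need not be measurable for \<open>i \<ge> n\<close>, where \<open>A1\<close> never looks.\<close>
  define Q where "Q \<omega> i = (if i < n then P \<omega> i else 1)" for \<omega> i
  have [measurable]: "(\<lambda>\<omega>. Q \<omega> i) \<in> borel_measurable M" for i
    unfolding Q_def using assms(1) by (cases "i < n") simp_all
  have "(\<lambda>\<omega>. A1 \<theta> r n (Q \<omega>) (Y \<omega>)) \<in> borel_measurable M"
    unfolding A1_def by measurable
  moreover have "A1 \<theta> r n (P \<omega>) (Y \<omega>) = A1 \<theta> r n (Q \<omega>) (Y \<omega>)" for \<omega>
    by (rule A1_cong) (simp add: Q_def)
  ultimately show ?thesis by simp
qed

lemma distr_pair_in_couplings:
  assumes "prob_space M" and [measurable]: "X \<in> borel_measurable M" "Y \<in> borel_measurable M"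
  shows "distr M borel (\<lambda>\<omega>. (X \<omega>, Y \<omega>)) \<in> couplings (distr M borel X) (distr M borel Y)"
proof -
  have [measurable]: "(fst :: real \<times> real \<Rightarrow> real) \<in> borel_measurable borel"
    "(snd :: real \<times> real \<Rightarrow> real) \<in> borel_measurable borel"
    by (intro borel_measurable_continuous_onI continuous_intros)+
  have pair: "(\<lambda>\<omega>. (X \<omega>, Y \<omega>)) \<in> borel_measurable M" by measurable
  show ?thesis
    unfolding couplings_def
    using prob_space.prob_space_distr[OF assms(1) pair] by (simp add: distr_distr comp_def)
qed

lemma bdd_above_integral_couplings:
  fixes f :: "real \<times> real \<Rightarrow> real"
  assumes F: "AE z in F. z \<in> S" and G: "AE y in G. y \<in> T"
    and f: "\<And>z y. z \<in> S \<Longrightarrow> y \<in> T \<Longrightarrow> f (z, y) \<le> B" and "0 \<le> B"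
  shows "bdd_above ((\<lambda>\<pi>. integral\<^sup>L \<pi> f) ` couplings F G)"
proof (rule bdd_aboveI2)
  fix \<pi> assume "\<pi> \<in> couplings F G"
  then have "prob_space \<pi>" and sets: "sets \<pi> = sets borel"
    and marginals: "distr \<pi> borel fst = F" "distr \<pi> borel snd = G"
    unfolding couplings_def by auto
  interpret prob_space \<pi> by fact
  have "fst \<in> borel_measurable \<pi>" "snd \<in> borel_measurable \<pi>"
    unfolding measurable_cong_sets[OF sets refl]
    by (intro borel_measurable_continuous_onI continuous_intros)+
  then have "AE x in \<pi>. fst x \<in> S" "AE x in \<pi>. snd x \<in> T"
    using F G unfolding marginals[symmetric] by (auto dest: AE_distrD)
  then have "AE x in \<pi>. f x \<le> B"
    by eventually_elim (use f in auto)
  then have "integral\<^sup>L \<pi> f \<le> integral\<^sup>L \<pi> (\<lambda>_. B)"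
    using \<open>0 \<le> B\<close> by (intro integral_mono_AE') auto
  then show "integral\<^sup>L \<pi> f \<le> B" by (simp add: prob_space)
qed

lemma integral_le_Sup_couplings:
  fixes f :: "real \<times> real \<Rightarrow> real"
  assumes "prob_space M" and [measurable]: "X \<in> borel_measurable M" "Y \<in> borel_measurable M"
    and f: "f \<in> borel_measurable borel"
    and ranges: "\<And>\<omega>. \<omega> \<in> space M \<Longrightarrow> X \<omega> \<in> S" "\<And>\<omega>. \<omega> \<in> space M \<Longrightarrow> Y \<omega> \<in> T"
    and [measurable]: "S \<in> sets borel" "T \<in> sets borel"
    and bound: "\<And>z y. z \<in> S \<Longrightarrow> y \<in> T \<Longrightarrow> f (z, y) \<le> B" "0 \<le> B"
  shows "(\<integral>\<omega>. f (X \<omega>, Y \<omega>) \<partial>M)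
    \<le> Sup ((\<lambda>\<pi>. integral\<^sup>L \<pi> f) ` couplings (distr M borel X) (distr M borel Y))"
proof -
  have pair: "(\<lambda>\<omega>. (X \<omega>, Y \<omega>)) \<in> borel_measurable M" by measurable
  have "AE z in distr M borel X. z \<in> S" "AE y in distr M borel Y. y \<in> T"
    using ranges by (auto simp: AE_distr_iff intro!: AE_I2)
  then have bdd: "bdd_above ((\<lambda>\<pi>. integral\<^sup>L \<pi> f) ` couplings (distr M borel X) (distr M borel Y))"
    using bound by (rule bdd_above_integral_couplings)
  have "(\<integral>\<omega>. f (X \<omega>, Y \<omega>) \<partial>M) = integral\<^sup>L (distr M borel (\<lambda>\<omega>. (X \<omega>, Y \<omega>))) f"
    by (rule integral_distr[OF pair f, symmetric])
  also have "\<dots> \<le> Sup ((\<lambda>\<pi>. integral\<^sup>L \<pi> f) ` couplings (distr M borel X) (distr M borel Y))"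
    using distr_pair_in_couplings[OF assms(1-3)] bdd by (intro cSup_upper) auto
  finally show ?thesis .
qed

locale random_prices = prob_space M for M :: "'a measure" +
  fixes \<theta> :: real and n :: nat and P :: "'a \<Rightarrow> nat \<Rightarrow> real" and Y :: "'a \<Rightarrow> real"
  assumes n_pos: "1 \<le> n"
    and P_meas: "\<And>i. i < n \<Longrightarrow> (\<lambda>\<omega>. P \<omega> i) \<in> borel_measurable M"
    and P_range: "\<And>\<omega> i. \<omega> \<in> space M \<Longrightarrow> i < n \<Longrightarrow> P \<omega> i \<in> {1..\<theta>}"
    and Y_meas[measurable]: "Y \<in> borel_measurable M"
    and Y_range: "\<And>\<omega>. \<omega> \<in> space M \<Longrightarrow> Y \<omega> \<in> {1..\<theta>}"
begin

definition Pstar :: "'a \<Rightarrow> real" where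
  "Pstar = (\<lambda>\<omega>. Max (P \<omega> ` {..<n}))"

lemma Pstar_range:
  assumes "\<omega> \<in> space M"
  shows "Pstar \<omega> \<in> {1..\<theta>}"
  unfolding Pstar_def using n_pos P_range[OF assms] by (rule Max_image_lessThan_in)

lemma borel_measurable_Pstar[measurable]: "Pstar \<in> borel_measurable M"
  unfolding Pstar_def using P_meas by (intro borel_measurable_Max) auto

lemma integrable_Pstar: "integrable M Pstar"
  by (intro integrable_const_bound[where B = \<theta>] AE_I2) (auto dest: Pstar_range)

lemma expectation_Pstar_ge_1: "1 \<le> expectation Pstar"
  using integrable_Pstar Pstar_range by (intro integral_ge_const AE_I2) auto

lemma integrable_Pstar_distance:
  "integrable M (\<lambda>\<omega>. Pstar \<omega> * \<bar>Pstar \<omega> - Y \<omega>\<bar>)"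
proof (intro integrable_const_bound[where B = "\<theta> * \<theta>"] AE_I2)
  fix \<omega> assume \<omega>: "\<omega> \<in> space M"
  then show "norm (Pstar \<omega> * \<bar>Pstar \<omega> - Y \<omega>\<bar>) \<le> \<theta> * \<theta>"
    using Pstar_range[OF \<omega>] Y_range[OF \<omega>] by (auto simp: abs_mult intro!: mult_mono)
qed measurable

lemma expectation_Pstar_distance_le_Sup_couplings:
  "expectation (\<lambda>\<omega>. Pstar \<omega> * \<bar>Pstar \<omega> - Y \<omega>\<bar>)
    \<le> Sup ((\<lambda>\<pi>. integral\<^sup>L \<pi> (\<lambda>(z, y). z * \<bar>z - y\<bar>))
         ` couplings (distr M borel Pstar) (distr M borel Y))"
proof -
  have "expectation (\<lambda>\<omega>. (\<lambda>(z, y). z * \<bar>z - y\<bar>) (Pstar \<omega>, Y \<omega>))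
    \<le> Sup ((\<lambda>\<pi>. integral\<^sup>L \<pi> (\<lambda>(z, y). z * \<bar>z - y\<bar>))
         ` couplings (distr M borel Pstar) (distr M borel Y))"
  proof (rule integral_le_Sup_couplings[OF prob_space_axioms _ Y_meas _ Pstar_range Y_range])
    show "(\<lambda>(z, y). z * \<bar>z - y\<bar>) \<in> (borel_measurable borel :: (real \<times> real \<Rightarrow> real) set)"
      unfolding case_prod_beta by (intro borel_measurable_continuous_onI continuous_intros)
    show "(\<lambda>(z, y). z * \<bar>z - y\<bar>) (z, y) \<le> \<theta> * \<theta>" if "z \<in> {1..\<theta>}" "y \<in> {1..\<theta>}" for z y
      using that by (auto intro!: mult_mono)
  qed auto
  then show ?thesis by simp
qed

lemma expectation_A1_ge:
  assumes r: "0 < r" "r < 1" "1 < r * \<theta>" "r\<^sup>2 * \<theta> \<le> 1"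
    and \<beta>: "(1 - r\<^sup>2 * \<theta>) / (r * \<theta>) * (1 / (1 - r)) \<le> \<beta>"
      "(1 - r\<^sup>2 * \<theta>) / (r * \<theta>) * (1 / (r * \<theta> - 1)) \<le> \<beta>"
  shows "expectation Pstar / (r * \<theta>) - \<beta> * expectation (\<lambda>\<omega>. Pstar \<omega> * \<bar>Pstar \<omega> - Y \<omega>\<bar>)
    \<le> expectation (\<lambda>\<omega>. A1 \<theta> r n (P \<omega>) (Y \<omega>))"
proof -
  have "integrable M (\<lambda>\<omega>. A1 \<theta> r n (P \<omega>) (Y \<omega>))"
  proof (intro integrable_const_bound[where B = \<theta>] AE_I2)
    fix \<omega> assume \<omega>: "\<omega> \<in> space M"
    have "A1 \<theta> r n (P \<omega>) (Y \<omega>) \<in> {1..\<theta>}"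
      using P_range[OF \<omega>] Pstar_range[OF \<omega>] by (intro A1_in) auto
    then show "norm (A1 \<theta> r n (P \<omega>) (Y \<omega>)) \<le> \<theta>" by auto
  qed (rule borel_measurable_A1[OF P_meas Y_meas])
  moreover have "Pstar \<omega> / (r * \<theta>) - \<beta> * (Pstar \<omega> * \<bar>Pstar \<omega> - Y \<omega>\<bar>) \<le> A1 \<theta> r n (P \<omega>) (Y \<omega>)"
    if "\<omega> \<in> space M" for \<omega>
    unfolding Pstar_def using r \<beta> n_pos P_range[OF that] by (rule scaled_Max_minus_penalty_le_A1)
  ultimately show ?thesis
    using integral_mono[of M "\<lambda>\<omega>. Pstar \<omega> / (r * \<theta>) - \<beta> * (Pstar \<omega> * \<bar>Pstar \<omega> - Y \<omega>\<bar>)"]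
      integrable_Pstar integrable_Pstar_distance
    by simp
qed

end

theorem corollary9:
  fixes \<theta> r :: real and n :: nat
    and M :: "'a measure" and P :: "'a \<Rightarrow> nat \<Rightarrow> real" and Y :: "'a \<Rightarrow> real"
  assumes theta: "\<theta> > 1"
    and r_lo: "1 / \<theta> < r" and r_hi: "r \<le> 1 / sqrt \<theta>"
    and n_pos: "n \<ge> 1"
    and M: "prob_space M"
    and P_meas: "\<And>i. i < n \<Longrightarrow> (\<lambda>\<omega>. P \<omega> i) \<in> borel_measurable M"
    and P_range: "\<And>\<omega> i. \<omega> \<in> space M \<Longrightarrow> i < n \<Longrightarrow> P \<omega> i \<in> {1..\<theta>}"
    and Y_meas: "Y \<in> borel_measurable M"
    and Y_range: "\<And>\<omega>. \<omega> \<in> space M \<Longrightarrow> Y \<omega> \<in> {1..\<theta>}"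
  shows "(let Pstar = (\<lambda>\<omega>. Max ((P \<omega>) ` {..<n}));
              F = distr M borel Pstar;
              G = distr M borel Y;
              \<beta> = (1 - r\<^sup>2 * \<theta>) / (r * \<theta>) * max (1 / (1 - r)) (1 / (r * \<theta> - 1))
          in (integral\<^sup>L M (\<lambda>\<omega>. A1 \<theta> r n (P \<omega>) (Y \<omega>))) / (integral\<^sup>L M Pstar)
             \<ge> 1 / (r * \<theta>) - \<beta> * (Sup ((\<lambda>\<pi>. integral\<^sup>L \<pi> (\<lambda>(z, y). z * \<bar>z - y\<bar>)) ` couplings F G))
                                    / (integral\<^sup>L M Pstar))"
proof -
  interpret random_prices M \<theta> n P Y
    using M n_pos P_meas P_range Y_meas Y_range
    by (intro random_prices.intro random_prices_axioms.intro)
  note r = threshold_parameter_bounds[OF theta r_lo r_hi]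
  define \<beta> where "\<beta> = (1 - r\<^sup>2 * \<theta>) / (r * \<theta>) * max (1 / (1 - r)) (1 / (r * \<theta> - 1))"
  define S where "S = Sup ((\<lambda>\<pi>. integral\<^sup>L \<pi> (\<lambda>(z, y). z * \<bar>z - y\<bar>))
    ` couplings (distr M borel Pstar) (distr M borel Y))"
  define E where "E = expectation Pstar"
  have \<beta>_ge: "(1 - r\<^sup>2 * \<theta>) / (r * \<theta>) * (1 / (1 - r)) \<le> \<beta>"
    "(1 - r\<^sup>2 * \<theta>) / (r * \<theta>) * (1 / (r * \<theta> - 1)) \<le> \<beta>"
    unfolding \<beta>_def by (intro mult_left_mono; use r in auto)+
  then have "0 \<le> \<beta>" using order_trans[OF _ \<beta>_ge(1)] r by simp
  then have "\<beta> * expectation (\<lambda>\<omega>. Pstar \<omega> * \<bar>Pstar \<omega> - Y \<omega>\<bar>) \<le> \<beta> * S"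
    unfolding S_def by (intro mult_left_mono expectation_Pstar_distance_le_Sup_couplings)
  with expectation_A1_ge[OF r \<beta>_ge]
  have "E / (r * \<theta>) - \<beta> * S \<le> expectation (\<lambda>\<omega>. A1 \<theta> r n (P \<omega>) (Y \<omega>))"
    unfolding E_def by linarith
  moreover have "0 < E" using expectation_Pstar_ge_1 unfolding E_def by simp
  ultimately have "(E / (r * \<theta>) - \<beta> * S) / E \<le> expectation (\<lambda>\<omega>. A1 \<theta> r n (P \<omega>) (Y \<omega>)) / E"
    by (intro divide_right_mono) auto
  then have "1 / (r * \<theta>) - \<beta> * S / E \<le> expectation (\<lambda>\<omega>. A1 \<theta> r n (P \<omega>) (Y \<omega>)) / E"
    using \<open>0 < E\<close> by (simp add: diff_divide_distrib)
  then show ?thesis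
    unfolding Let_def Pstar_def[symmetric] \<beta>_def[symmetric] S_def[symmetric] E_def[symmetric] .
qed

end
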